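(* Let $k$ be an unramified extension of $\mathbb{Q}_2$ with ring of integers $\mathfrak O_k$, let $C_{2^n}=\langle\sigma\rangle$ ($n\ge1$), and let $\mathcal A$ be a finitely generated $\mathfrak O_k[C_{2^n}]$-module that is torsion-free over $\mathfrak O_k$. Let $H$ be the subgroup of order $2$, $\mathrm{Tr}_H=1+\sigma^{2^{n-1}}$, $\mathcal A^H$ the submodule fixed by $H$, and $\mathrm{Tr}_H\mathcal A$ the image of $\mathrm{Tr}_H$. Then $Q:=\mathrm{Tr}_H\mathcal A/\big((\sigma-1)\mathrm{Tr}_H\mathcal A+2\mathcal A^H\big)$ is free over $\mathfrak O_k/2\mathfrak O_k$. Moreover, if $\mathcal B\subseteq\mathcal A$ is such that the images of $\mathrm{Tr}_H\mathcal B$ form an $\mathfrak O_k/2\mathfrak O_k$-basis of $Q$, then the images of $\mathcal B$ in $\mathcal A/\mathcal A^H$ can be extended to a basis of $\mathcal A/\mathcal A^H$ over $\mathfrak O_k[C_{2^n}]/\langle\mathrm{Tr}_H\rangle$. *)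

theory Defs
  imports Main "HOL-Computational_Algebra.Polynomial"
begin

text \<open>The ring of integers of an unramified (finite) extension of Q_2, characterised
  abstractly: an integral domain in which 2 is a nonzero non-unit, every nonzero element
  is a unit times a power of 2 (so it is a DVR with uniformiser 2), the residue ring
  modulo 2 is finite, and it is complete for the 2-adic topology.  By Cohen's structure
  theorem these are exactly the rings W(F_q) = O_k, k/Q_2 finite unramified.\<close>
definition unram_Z2_int :: "'a::idom itself \<Rightarrow> bool" where
  "unram_Z2_int _ \<longleftrightarrow>
     (2::'a) \<noteq> 0 \<and> \<not> (2::'a) dvd 1 \<and>
     (\<forall>x::'a. x \<noteq> 0 \<longrightarrow> (\<exists>u m. u dvd 1 \<and> x = u * 2 ^ m)) \<and>
     finite ((\<lambda>x::'a. {y. (2::'a) dvd (x - y)}) ` UNIV) \<and>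
     (\<forall>x :: nat \<Rightarrow> 'a.
        (\<forall>m. \<exists>N. \<forall>i\<ge>N. \<forall>j\<ge>N. (2::'a) ^ m dvd (x i - x j)) \<longrightarrow>
        (\<exists>L. \<forall>m. \<exists>N. \<forall>i\<ge>N. (2::'a) ^ m dvd (x i - L)))"

text \<open>Action of the group ring O[C_{2^n}] = O[X]/(X^{2^n}-1) on a module with
  generator s: a polynomial p acts as p(s).\<close>
definition gact :: "('a::comm_ring_1 \<Rightarrow> 'm::ab_group_add \<Rightarrow> 'm) \<Rightarrow> ('m \<Rightarrow> 'm)
                      \<Rightarrow> 'a poly \<Rightarrow> 'm \<Rightarrow> 'm" where
  "gact scale s p x = (\<Sum>i\<le>degree p. scale (coeff p i) ((s ^^ i) x))"

definition TrH :: "('m::ab_group_add \<Rightarrow> 'm) \<Rightarrow> nat \<Rightarrow> 'm \<Rightarrow> 'm" where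
  "TrH s n x = x + (s ^^ (2 ^ (n - 1))) x"

definition fixH :: "('m \<Rightarrow> 'm) \<Rightarrow> nat \<Rightarrow> 'm set" where
  "fixH s n = {x. (s ^^ (2 ^ (n - 1))) x = x}"

definition relQ :: "('a::comm_ring_1 \<Rightarrow> 'm::ab_group_add \<Rightarrow> 'm) \<Rightarrow> ('m \<Rightarrow> 'm) \<Rightarrow> nat \<Rightarrow> 'm set" where
  "relQ scale s n = {(s t - t) + scale 2 a | t a. t \<in> range (TrH s n) \<and> a \<in> fixH s n}"

text \<open>Kernel of O[X] \<rightarrow> O[C_{2^n}] \<rightarrow> O[C_{2^n}]/<Tr_H>.\<close>
definition trH_ideal :: "nat \<Rightarrow> 'a::comm_ring_1 poly set" where
  "trH_ideal n = {a * (monom 1 (2 ^ n) - 1) + b * (1 + monom 1 (2 ^ (n - 1))) | a b. True}"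

text \<open>qbasis scale I V N v J: the family (v j + N)_{j \<in> J} is a basis of the
  (R/I)-module V/N (where R acts on V via scale, I annihilates V/N, N \<subseteq> V).\<close>
definition qbasis :: "('r::comm_ring_1 \<Rightarrow> 'm::ab_group_add \<Rightarrow> 'm) \<Rightarrow> 'r set \<Rightarrow> 'm set \<Rightarrow> 'm set
                       \<Rightarrow> ('i \<Rightarrow> 'm) \<Rightarrow> 'i set \<Rightarrow> bool" where
  "qbasis scale I V N v J \<longleftrightarrow>
     v ` J \<subseteq> V \<and>
     (\<forall>y\<in>V. \<exists>S c. finite S \<and> S \<subseteq> J \<and> y - (\<Sum>j\<in>S. scale (c j) (v j)) \<in> N) \<and>
     (\<forall>S c. finite S \<longrightarrow> S \<subseteq> J \<longrightarrow> (\<Sum>j\<in>S. scale (c j) (v j)) \<in> N \<longrightarrow> (\<forall>j\<in>S. c j \<in> I))"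

end

theory Submission
  imports Defs "HOL-Library.Set_Algebras"
begin

text \<open>Write \<open>\<pi> = \<sigma> - 1\<close> and \<open>D = 1 + \<sigma>^(2^(n-1))\<close>, so that \<open>Tr_H\<close> acts as \<open>D\<close>.
  Since \<open>2 Tr_H A \<subseteq> 2 A^H\<close>, the module \<open>Q\<close> is a vector space over the residue field \<open>O/2\<close>,
  and a maximal subset of the images of a finite generating set that is independent modulo 2 is
  a basis of it.

  For the second part, \<open>Tr_H\<close> maps \<open>W = A^H + \<pi>A\<close> into the relations of \<open>Q\<close>, so \<open>B\<close> is
  independent modulo \<open>W\<close> over \<open>O/2\<close>; extend it in the same way to a set \<open>X\<close> spanning \<open>A\<close>
  modulo \<open>W\<close>.  As \<open>\<pi>^(2^(n-1)) \<equiv> D\<close> modulo 2, Nakayama's lemma shows that \<open>X\<close> generates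
  \<open>A\<close> over \<open>O[\<sigma>]\<close> modulo \<open>A^H\<close>.  A relation \<open>\<Sum> c\<^sub>x x \<in> A^H\<close> forces every \<open>c\<^sub>x\<close> into
  \<open>(\<pi>^k, D)\<close> for all \<open>k\<close>, peeling off one factor \<open>\<pi>\<close> at a time (\<open>\<pi>\<close> is injective on
  \<open>A/A^H\<close> because \<open>A\<close> has no 2-torsion).  Since \<open>\<pi>^(2^(n-1)) \<in> (2, D)\<close>, this puts
  \<open>c\<^sub>x\<close> into \<open>(2^k, D)\<close> for all \<open>k\<close>, and 2-adic separatedness of \<open>O\<close> gives \<open>D | c\<^sub>x\<close>.\<close>

section \<open>Independence modulo a submodule over a local ring\<close>

definition indep_mod :: "('a::comm_ring_1 \<Rightarrow> 'b::ab_group_add \<Rightarrow> 'b) \<Rightarrow> 'a set \<Rightarrow> 'b set \<Rightarrow> 'b set \<Rightarrow> bool"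
  where "indep_mod scale I N B \<longleftrightarrow>
    (\<forall>S c. finite S \<longrightarrow> S \<subseteq> B \<longrightarrow> (\<Sum>j\<in>S. scale (c j) j) \<in> N \<longrightarrow> (\<forall>j\<in>S. c j \<in> I))"

lemma indep_modD:
  "indep_mod scale I N B \<Longrightarrow> finite S \<Longrightarrow> S \<subseteq> B \<Longrightarrow> (\<Sum>j\<in>S. scale (c j) j) \<in> N \<Longrightarrow> j \<in> S \<Longrightarrow> c j \<in> I"
  unfolding indep_mod_def by blast

lemma indep_mod_empty: "indep_mod scale I N {}"
  by (simp add: indep_mod_def)

context module
begin

lemma subspace_set_plus:
  assumes "subspace A" "subspace B"
  shows "subspace (A + B)"
proof (rule subspaceI)
  show "0 \<in> A + B"
    using set_plus_intro[OF subspace_0 subspace_0, OF assms] by simp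
next
  fix x y assume "x \<in> A + B" "y \<in> A + B"
  then obtain a b a' b' where "x = a + b" "y = a' + b'" "a \<in> A" "b \<in> B" "a' \<in> A" "b' \<in> B"
    by (auto elim!: set_plus_elim)
  then have "x + y = (a + a') + (b + b')"
    by (simp add: algebra_simps)
  with assms \<open>a \<in> A\<close> \<open>a' \<in> A\<close> \<open>b \<in> B\<close> \<open>b' \<in> B\<close> show "x + y \<in> A + B"
    by (simp add: set_plus_intro subspace_add)
next
  fix c x assume "x \<in> A + B"
  then obtain a b where "x = a + b" "a \<in> A" "b \<in> B"
    by (auto elim!: set_plus_elim)
  then show "c *s x \<in> A + B"
    using assms by (simp add: scale_right_distrib set_plus_intro subspace_scale)
qed

lemma scale_two: "2 *s x = x + x"
  using scale_left_distrib[of 1 1 x] by (simp add: one_add_one)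

lemma mem_span_plus_iff:
  "y \<in> span X + N \<longleftrightarrow> (\<exists>S c. finite S \<and> S \<subseteq> X \<and> y - (\<Sum>j\<in>S. c j *s j) \<in> N)"
proof
  assume "y \<in> span X + N"
  then obtain a w where "y = a + w" "a \<in> span X" "w \<in> N"
    by (auto elim!: set_plus_elim)
  moreover from \<open>a \<in> span X\<close> obtain S c where "finite S" "S \<subseteq> X" "a = (\<Sum>j\<in>S. c j *s j)"
    unfolding span_explicit by blast
  ultimately show "\<exists>S c. finite S \<and> S \<subseteq> X \<and> y - (\<Sum>j\<in>S. c j *s j) \<in> N"
    by (intro exI[of _ S] exI[of _ c]) simp
next
  assume "\<exists>S c. finite S \<and> S \<subseteq> X \<and> y - (\<Sum>j\<in>S. c j *s j) \<in> N"
  then obtain S c where "finite S" "S \<subseteq> X" "y - (\<Sum>j\<in>S. c j *s j) \<in> N"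
    by blast
  moreover have "y = (\<Sum>j\<in>S. c j *s j) + (y - (\<Sum>j\<in>S. c j *s j))"
    by simp
  moreover have "(\<Sum>j\<in>S. c j *s j) \<in> span X"
    using \<open>S \<subseteq> X\<close> by (intro span_sum span_scale span_base) blast
  ultimately show "y \<in> span X + N"
    by (metis set_plus_intro)
qed

lemma qbasis_id_iff:
  "qbasis scale I V N id X \<longleftrightarrow> X \<subseteq> V \<and> V \<subseteq> span X + N \<and> indep_mod scale I N X"
  unfolding qbasis_def indep_mod_def subset_iff mem_span_plus_iff by (simp add: Ball_def)

lemma mem_span_plus_if_not_indep_mod_insert:
  assumes units: "\<And>c. \<not> p dvd c \<Longrightarrow> c dvd 1"
    and W: "subspace W" and pg: "p *s g \<in> W"
    and B: "indep_mod scale {c. p dvd c} W B"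
    and not_indep: "\<not> indep_mod scale {c. p dvd c} W (insert g B)"
  shows "g \<in> span B + W"
proof -
  obtain S c j where S: "finite S" "S \<subseteq> insert g B" "(\<Sum>j\<in>S. c j *s j) \<in> W"
    and j: "j \<in> S" "\<not> p dvd c j"
    using not_indep unfolding indep_mod_def by auto
  have "g \<in> S"
  proof (rule ccontr)
    assume "g \<notin> S"
    then have "S \<subseteq> B" using S(2) by auto
    then show False using B S j unfolding indep_mod_def by blast
  qed
  define rest where "rest = (\<Sum>j\<in>S - {g}. c j *s j)"
  have rest_span: "rest \<in> span B"
    unfolding rest_def using S(2) by (intro span_sum span_scale span_base) auto
  have split: "(\<Sum>j\<in>S. c j *s j) = c g *s g + rest"
    unfolding rest_def using S(1) \<open>g \<in> S\<close> by (simp add: sum.remove)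
  show ?thesis
  proof (cases "p dvd c g")
    case True
    then obtain e where "c g = p * e" by blast
    then have "c g *s g = e *s (p *s g)" by (simp add: mult.commute)
    then have "c g *s g \<in> W" using subspace_scale[OF W pg, of e] by simp
    then have "(\<Sum>j\<in>S. c j *s j) - c g *s g \<in> W" using S(3) W by (simp add: subspace_diff)
    then have "rest \<in> W" by (simp add: split)
    then have "\<forall>i\<in>S - {g}. p dvd c i"
      using B S unfolding indep_mod_def rest_def by auto
    with j True show ?thesis by (cases "j = g") auto
  next
    case False
    then obtain u where u: "1 = c g * u" using units by blast
    have "g = (- (u *s rest)) + u *s (\<Sum>j\<in>S. c j *s j)"
      using u by (simp add: split scale_right_distrib mult.commute)
    moreover have "u *s (\<Sum>j\<in>S. c j *s j) \<in> W"
      using W S(3) by (simp add: subspace_scale)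
    moreover have "- (u *s rest) \<in> span B" using rest_span by (simp add: span_neg span_scale)
    ultimately show ?thesis by (metis set_plus_intro)
  qed
qed

lemma indep_mod_extend:
  assumes units: "\<And>c. \<not> p dvd c \<Longrightarrow> c dvd 1"
    and W: "subspace W" and G: "finite G" "\<And>g. g \<in> G \<Longrightarrow> p *s g \<in> W"
    and B: "indep_mod scale {c. p dvd c} W B"
  obtains Y where "Y \<subseteq> G" "indep_mod scale {c. p dvd c} W (B \<union> Y)" "G \<subseteq> span (B \<union> Y) + W"
proof -
  let ?C = "{Y. Y \<subseteq> G \<and> indep_mod scale {c. p dvd c} W (B \<union> Y)}"
  have "{} \<in> ?C" using B by simp
  then have "?C \<noteq> {}" by (metis empty_iff)
  moreover have "?C \<subseteq> Pow G" by blast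
  then have "finite ?C" using G(1) by (simp add: finite_subset)
  ultimately obtain Y where Y: "Y \<in> ?C" and maximal: "\<forall>Z\<in>?C. Y \<subseteq> Z \<longrightarrow> Y = Z"
    by (elim finite_has_maximal[THEN bexE])
  have "g \<in> span (B \<union> Y) + W" if "g \<in> G" for g
  proof (cases "g \<in> B \<union> Y")
    case True
    then have "g + 0 \<in> span (B \<union> Y) + W"
      by (intro set_plus_intro span_base subspace_0[OF W])
    then show ?thesis by simp
  next
    case False
    then have "insert g Y \<notin> ?C" using maximal by blast
    then have "\<not> indep_mod scale {c. p dvd c} W (insert g (B \<union> Y))"
      using that Y by simp
    then show ?thesis
      using mem_span_plus_if_not_indep_mod_insert[OF units W G(2)[OF that]] Y by simp
  qed
  then show ?thesis using that Y by blast
qed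

lemma nakayama_step:
  assumes units: "\<And>c. \<not> p dvd c \<Longrightarrow> c dvd 1" and nonunit: "\<not> p dvd 1"
    and P: "subspace P" and g: "g \<in> P + (\<lambda>z. p *s z) ` span (insert g G)"
  shows "g \<in> P + (\<lambda>z. p *s z) ` span G"
proof -
  obtain q z where q: "q \<in> P" "z \<in> span (insert g G)" "g = q + p *s z"
    using g by (auto elim!: set_plus_elim)
  obtain k where z': "z - k *s g \<in> span G"
    using q(2) span_breakdown_eq by blast
  have "\<not> p dvd 1 - p * k"
  proof
    assume "p dvd 1 - p * k"
    then have "p dvd (1 - p * k) + p * k" by (intro dvd_add) auto
    with nonunit show False by simp
  qed
  then obtain u where u: "1 = (1 - p * k) * u" using units by blast
  have "(1 - p * k) *s g = q + p *s (z - k *s g)"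
    using q(3) by (simp add: algebra_simps)
  then have "u *s ((1 - p * k) *s g) = u *s q + p *s (u *s (z - k *s g))"
    by (simp add: scale_right_distrib mult.commute)
  then have g_eq: "g = u *s q + p *s (u *s (z - k *s g))"
    using u by (simp add: mult.commute)
  have "u *s q \<in> P" using P q(1) by (rule subspace_scale)
  moreover have "u *s (z - k *s g) \<in> span G" using z' by (rule span_scale)
  ultimately have "u *s q + p *s (u *s (z - k *s g)) \<in> P + (\<lambda>z. p *s z) ` span G"
    by (intro set_plus_intro imageI)
  then show ?thesis by (simp only: g_eq[symmetric])
qed

lemma nakayama_span:
  assumes units: "\<And>c. \<not> p dvd c \<Longrightarrow> c dvd 1" and nonunit: "\<not> p dvd 1"
    and G: "finite G" and P: "subspace P"
  shows "span G \<subseteq> P + (\<lambda>z. p *s z) ` span G \<Longrightarrow> span G \<subseteq> P"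
  using G
proof (induction G rule: finite_induct)
  case empty
  then show ?case by (simp add: subspace_0[OF P])
next
  case (insert g G)
  have "g \<in> P + (\<lambda>z. p *s z) ` span G"
    using nakayama_step[OF units nonunit P] insert.prems span_base[of g "insert g G"] by blast
  then obtain q z where q: "q \<in> P" "z \<in> span G" "g = q + p *s z"
    by (auto elim!: set_plus_elim)
  have "span G \<subseteq> P + (\<lambda>z. p *s z) ` span G"
  proof
    fix x assume "x \<in> span G"
    then have "x \<in> P + (\<lambda>z. p *s z) ` span (insert g G)"
      using insert.prems span_mono[of G "insert g G"] by blast
    then obtain q' w where q': "q' \<in> P" "w \<in> span (insert g G)" "x = q' + p *s w"
      by (auto elim!: set_plus_elim)
    obtain k where k: "w - k *s g \<in> span G"
      using q'(2) span_breakdown_eq by blast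
    have "x = (q' + (p * k) *s q) + p *s ((w - k *s g) + (p * k) *s z)"
      using q'(3) q(3) by (simp add: algebra_simps)
    moreover have "q' + (p * k) *s q \<in> P"
      using q'(1) q(1) P by (simp add: subspace_add subspace_scale)
    moreover have "(w - k *s g) + (p * k) *s z \<in> span G"
      using k q(2) by (simp add: span_add span_scale)
    ultimately show "x \<in> P + (\<lambda>z. p *s z) ` span G"
      by (auto intro: set_plus_intro)
  qed
  then have span_G: "span G \<subseteq> P" by (rule insert.IH)
  then have "g \<in> P"
    using q P subspace_add subspace_scale by blast
  show ?case
  proof
    fix x assume "x \<in> span (insert g G)"
    then obtain k where "x - k *s g \<in> span G" using span_breakdown_eq by blast
    then have "(x - k *s g) + k *s g \<in> P"
      using span_G subspace_add[OF P _ subspace_scale[OF P \<open>g \<in> P\<close>]] by blast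
    then show "x \<in> P" by simp
  qed
qed

end

section \<open>Ideals with two generators\<close>

definition ideal2 :: "'a::comm_ring_1 \<Rightarrow> 'a \<Rightarrow> 'a set" where
  "ideal2 p q = {a * p + b * q | a b. True}"

lemma ideal2_iff: "x \<in> ideal2 p q \<longleftrightarrow> (\<exists>a b. x = a * p + b * q)"
  by (auto simp: ideal2_def)

lemma ideal2_multiple_left: "a * p \<in> ideal2 p q"
  unfolding ideal2_iff by (intro exI[of _ a] exI[of _ 0]) simp

lemma ideal2_multiple_right: "b * q \<in> ideal2 p q"
  unfolding ideal2_iff by (intro exI[of _ 0] exI[of _ b]) simp

lemma ideal2_add:
  assumes "x \<in> ideal2 p q" "y \<in> ideal2 p q"
  shows "x + y \<in> ideal2 p q"
proof -
  obtain a b a' b' where "x = a * p + b * q" "y = a' * p + b' * q"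
    using assms unfolding ideal2_iff by blast
  then have "x + y = (a + a') * p + (b + b') * q"
    by (simp add: algebra_simps)
  then show ?thesis unfolding ideal2_iff by blast
qed

lemma ideal2_mult_left: "x \<in> ideal2 p q \<Longrightarrow> y * x \<in> ideal2 p q"
proof -
  assume "x \<in> ideal2 p q"
  then obtain a b where "x = a * p + b * q" unfolding ideal2_iff by blast
  then have "y * x = (y * a) * p + (y * b) * q" by (simp add: algebra_simps)
  then show ?thesis unfolding ideal2_iff by blast
qed

lemma ideal2_mult:
  assumes "x \<in> ideal2 p q" "y \<in> ideal2 p' q"
  shows "x * y \<in> ideal2 (p * p') q"
proof -
  obtain a b a' b' where "x = a * p + b * q" "y = a' * p' + b' * q"
    using assms unfolding ideal2_iff by blast
  then have "x * y = (a * a') * (p * p') + (a * p * b' + b * y) * q"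
    by (simp add: algebra_simps)
  then show ?thesis unfolding ideal2_iff by blast
qed

lemma ideal2_power: "x \<in> ideal2 p q \<Longrightarrow> x ^ m \<in> ideal2 (p ^ m) q"
  by (induction m) (use ideal2_multiple_left[of 1] ideal2_mult in auto)

lemma ideal2_trans:
  assumes "x \<in> ideal2 p q" "p \<in> ideal2 p' q"
  shows "x \<in> ideal2 p' q"
proof -
  obtain a b a' b' where "x = a * p + b * q" "p = a' * p' + b' * q"
    using assms unfolding ideal2_iff by blast
  then have "x = (a * a') * p' + (a * b' + b) * q"
    by (simp add: algebra_simps)
  then show ?thesis unfolding ideal2_iff by blast
qed

section \<open>Polynomials\<close>

lemma X_minus_1_pow_two_pow:
  "\<exists>r. [:-1, 1::'a::comm_ring_1:] ^ (2 ^ m) = 1 + monom 1 (2 ^ m) + 2 * r"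
proof (induction m)
  case 0
  have "[:-1, 1::'a:] ^ (2 ^ 0) = 1 + monom 1 (2 ^ 0) + 2 * [:-1:]"
    by (simp add: monom_Suc one_pCons numeral_poly)
  then show ?case ..
next
  case (Suc m)
  then obtain r where r: "[:-1, 1::'a:] ^ (2 ^ m) = 1 + monom 1 (2 ^ m) + 2 * r" ..
  let ?M = "monom (1::'a) (2 ^ m)"
  have "[:-1, 1::'a:] ^ (2 ^ Suc m) = ([:-1, 1:] ^ (2 ^ m))\<^sup>2"
    by (simp add: power_mult[symmetric] mult.commute)
  also have "\<dots> = 1 + ?M * ?M + 2 * (?M + 2 * r + 2 * r * ?M + 2 * r * r)"
    unfolding r by (simp add: algebra_simps power2_eq_square)
  also have "?M * ?M = monom 1 (2 ^ Suc m)"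
    by (simp add: mult_monom mult_2)
  finally show ?case by blast
qed

lemma X_minus_1_dvd_monom_minus_1: "[:-1, 1::'a::comm_ring_1:] dvd monom 1 k - 1"
  using poly_eq_0_iff_dvd[of "monom (1::'a) k - 1" 1] by (simp add: poly_monom)

lemma X_minus_1_division: "\<exists>q. p = [:-1, 1::'a::comm_ring_1:] * q + [:poly p 1:]"
proof -
  have "[:-1, 1:] dvd p - [:poly p 1:]"
    using poly_eq_0_iff_dvd[of "p - [:poly p 1:]" 1] by simp
  then obtain q where "p - [:poly p 1:] = [:-1, 1:] * q" by (rule dvdE)
  then show ?thesis by (intro exI[of _ q]) (simp add: algebra_simps)
qed

lemma lead_coeff_1_plus_monom:
  assumes "0 < k"
  shows "lead_coeff (1 + monom (1::'a::comm_ring_1) k) = 1"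
proof -
  have "degree (1::'a poly) < degree (monom (1::'a) k)"
    using assms by (simp add: degree_monom_eq)
  then have "lead_coeff (1 + monom (1::'a) k) = lead_coeff (monom 1 k)"
    by (rule lead_coeff_add_le)
  then show ?thesis by (simp only: lead_coeff_monom)
qed

lemma two_mem_ideal2_X_minus_1: "2 \<in> ideal2 [:-1, 1::'a::comm_ring_1:] (1 + monom 1 k)"
proof -
  obtain w where w: "monom 1 k - 1 = w * [:-1, 1::'a:]"
    using X_minus_1_dvd_monom_minus_1 by (metis dvd_def mult.commute)
  have "(2 :: 'a poly) = (1 + monom 1 k) - (monom 1 k - 1)"
    by simp
  also have "\<dots> = (- w) * [:-1, 1:] + 1 * (1 + monom 1 k)"
    unfolding w by (simp only: mult_minus_left mult_1 diff_conv_add_uminus add.commute)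
  finally show ?thesis unfolding ideal2_iff by blast
qed

lemma monic_div_mod_exists:
  fixes D x :: "'a::idom poly"
  assumes monic: "lead_coeff D = 1" and pos: "0 < degree D"
  obtains q r where "x = D * q + r" "degree r < degree D"
proof -
  obtain q r where qr: "pseudo_divmod x D = (q, r)" by force
  have "D \<noteq> 0" using monic by auto
  from pseudo_divmod[OF this qr] monic pos show ?thesis
    by (intro that[of q r]) auto
qed

lemma monic_remainder_unique:
  fixes D :: "'a::idom poly"
  assumes monic: "lead_coeff D = 1"
    and eq: "D * q + r = D * q' + r'" and deg: "degree r < degree D" "degree r' < degree D"
  shows "r = r'"
proof (rule ccontr)
  assume "r \<noteq> r'"
  have "D * (q - q') = r' - r" using eq by (simp add: algebra_simps)
  with \<open>r \<noteq> r'\<close> have "q - q' \<noteq> 0" by auto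
  with monic have "degree D \<le> degree (D * (q - q'))"
    by (subst degree_mult_eq) auto
  moreover have "degree (r' - r) < degree D"
    using deg degree_diff_le_max[of r' r] by linarith
  ultimately show False using \<open>D * (q - q') = r' - r\<close> by simp
qed

lemma monic_dvd_if_mem_ideal2_powers:
  fixes D x :: "'a::idom poly"
  assumes monic: "lead_coeff D = 1"
    and separated: "\<And>c. (\<And>k. a ^ k dvd c) \<Longrightarrow> c = 0"
    and mem: "\<And>k. x \<in> ideal2 ([:a:] ^ k) D"
  shows "D dvd x"
proof (cases "degree D = 0")
  case True
  with monic have "D = 1" by (metis degree_0_id pCons_one)
  then show ?thesis by simp
next
  case False
  then obtain q r where qr: "x = D * q + r" "degree r < degree D"
    using monic_div_mod_exists[OF monic] by blast
  have "a ^ k dvd coeff r i" for k i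
  proof -
    obtain y z where yz: "x = y * [:a:] ^ k + z * D"
      using mem[of k] unfolding ideal2_iff by blast
    obtain qy ry where y: "y = D * qy + ry" "degree ry < degree D"
      using monic_div_mod_exists[OF monic] False by blast
    have "x = D * (smult (a ^ k) qy + z) + smult (a ^ k) ry"
      unfolding yz y(1) by (simp add: poly_const_pow algebra_simps smult_add_right)
    moreover have "degree (smult (a ^ k) ry) < degree D"
      using y(2) degree_smult_le[of "a ^ k" ry] by linarith
    ultimately have "r = smult (a ^ k) ry"
      using monic_remainder_unique[OF monic] qr by metis
    then show ?thesis by simp
  qed
  then have "r = 0" using separated by (intro poly_eqI) auto
  with qr show ?thesis by simp
qed

section \<open>The polynomial action of an endomorphism\<close>

locale module_endo = module scale
  for scale :: "'a::comm_ring_1 \<Rightarrow> 'm::ab_group_add \<Rightarrow> 'm" (infixr \<open>*s\<close> 75) +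
  fixes s :: "'m \<Rightarrow> 'm"
  assumes module_hom_s: "module_hom scale scale s"
begin

abbreviation act :: "'a poly \<Rightarrow> 'm \<Rightarrow> 'm" (infixr \<open>\<cdot>\<close> 75)
  where "p \<cdot> x \<equiv> gact scale s p x"

lemma module_hom_funpow: "module_hom scale scale (s ^^ i)"
proof (induction i)
  case (Suc i)
  then show ?case
    using module_hom_compose[OF Suc module_hom_s] by (metis funpow.simps(2))
qed (simp add: module_hom_ident)

lemma act_eq_sum:
  assumes "degree p \<le> N"
  shows "p \<cdot> x = (\<Sum>i\<le>N. coeff p i *s (s ^^ i) x)"
  unfolding gact_def
  by (rule sum.mono_neutral_left) (use assms in \<open>auto simp: coeff_eq_0\<close>)

lemma module_hom_act: "module_hom scale scale (act p)"
  unfolding module_hom_iff gact_def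
  using module_axioms
  by (simp add: module_hom.add[OF module_hom_funpow] module_hom.scale[OF module_hom_funpow]
      scale_right_distrib sum.distrib scale_sum_right mult.commute)

lemmas act_add = module_hom.add[OF module_hom_act]
  and act_sum = module_hom.sum[OF module_hom_act]

lemma act_add_poly: "(p + q) \<cdot> x = p \<cdot> x + q \<cdot> x"
proof -
  let ?N = "max (degree p) (degree q)"
  have "degree (p + q) \<le> ?N" by (rule degree_add_le) auto
  then show ?thesis
    by (simp add: act_eq_sum[of p ?N] act_eq_sum[of q ?N] act_eq_sum[of "p + q" ?N]
        scale_left_distrib sum.distrib)
qed

lemma act_smult: "smult c p \<cdot> x = c *s (p \<cdot> x)"
  by (simp add: act_eq_sum[OF degree_smult_le] act_eq_sum[of p "degree p"] scale_sum_right)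

lemma act_pCons: "pCons a p \<cdot> x = a *s x + s (p \<cdot> x)"
proof -
  have "pCons a p \<cdot> x = (\<Sum>i\<le>Suc (degree p). coeff (pCons a p) i *s (s ^^ i) x)"
    by (rule act_eq_sum) simp
  also have "\<dots> = a *s x + (\<Sum>i\<le>degree p. coeff p i *s (s ^^ Suc i) x)"
    by (subst sum.atMost_Suc_shift) simp
  also have "(\<Sum>i\<le>degree p. coeff p i *s (s ^^ Suc i) x) = s (p \<cdot> x)"
    by (simp add: gact_def module_hom.sum[OF module_hom_s] module_hom.scale[OF module_hom_s])
  finally show ?thesis .
qed

lemma act_one: "1 \<cdot> x = x"
  by (simp add: gact_def)

lemma act_mult: "(p * q) \<cdot> x = p \<cdot> q \<cdot> x"
proof (induction p)
  case (pCons a p)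
  have "(pCons a p * q) \<cdot> x = smult a q \<cdot> x + pCons 0 (p * q) \<cdot> x"
    by (simp only: mult_pCons_left act_add_poly)
  also have "\<dots> = a *s (q \<cdot> x) + s ((p * q) \<cdot> x)"
    by (simp add: act_smult act_pCons)
  finally show ?case
    using pCons.IH by (simp add: act_pCons)
qed (simp add: gact_def)

lemma module_act: "module act"
  by unfold_locales (simp_all add: act_add act_add_poly act_mult act_one)

sublocale poly: module act
  by (rule module_act)

lemma act_const: "[:c:] \<cdot> x = c *s x"
  by (simp add: gact_def)

lemma act_monom: "monom 1 k \<cdot> x = (s ^^ k) x"
proof (induction k)
  case (Suc k)
  have "monom (1::'a) (Suc k) = pCons 0 (monom 1 k)" by (simp add: monom_Suc)
  with Suc show ?case by (simp add: act_pCons)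
qed (simp add: gact_def)

lemma act_X_minus_1: "[:-1, 1:] \<cdot> x = s x - x"
  by (simp add: act_pCons act_const module_hom.zero[OF module_hom_s])

lemma funpow_act: "(s ^^ k) (p \<cdot> x) = p \<cdot> (s ^^ k) x"
  by (metis act_monom act_mult mult.commute)

lemma act_mult_right: "(p * q) \<cdot> x = q \<cdot> p \<cdot> x"
  by (simp only: mult.commute[of p] act_mult)

lemma act_commute: "p \<cdot> q \<cdot> x = q \<cdot> p \<cdot> x"
  using act_mult_right[of q p x] act_mult[of q p x] by (rule trans[OF sym])

lemma subspace_if_poly_subspace: "poly.subspace A \<Longrightarrow> subspace A"
  unfolding subspace_def poly.subspace_def by (metis act_const)

lemma span_subset_poly_span: "span X \<subseteq> poly.span X"
  by (rule span_minimal[OF poly.span_superset subspace_if_poly_subspace[OF poly.subspace_span]])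

lemma UNIV_subset_plus_range_act_power:
  assumes P: "poly.subspace P" and q: "UNIV \<subseteq> P + range (act q)"
  shows "UNIV \<subseteq> P + range (act (q ^ k))"
proof (induction k)
  case 0
  have "0 + (q ^ 0) \<cdot> x \<in> P + range (act (q ^ 0))" for x
    by (intro set_plus_intro poly.subspace_0[OF P] rangeI)
  then show ?case by (auto simp: act_one)
next
  case (Suc k)
  show ?case
  proof
    fix x
    have "x \<in> P + range (act (q ^ k))" using Suc.IH by (rule subsetD) simp
    then obtain a y where "a \<in> P" "x = a + q ^ k \<cdot> y"
      by (auto elim!: set_plus_elim)
    have "y \<in> P + range (act q)" using q by (rule subsetD) simp
    then obtain b z where "b \<in> P" "y = b + q \<cdot> z"
      by (auto elim!: set_plus_elim)
    have "x = (a + q ^ k \<cdot> b) + q ^ Suc k \<cdot> z"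
      using \<open>x = a + q ^ k \<cdot> y\<close> \<open>y = b + q \<cdot> z\<close>
      by (simp only: power_Suc2 act_mult act_add add.assoc)
    moreover have "a + q ^ k \<cdot> b \<in> P"
      using P \<open>a \<in> P\<close> \<open>b \<in> P\<close> by (simp add: poly.subspace_add poly.subspace_scale)
    ultimately show "x \<in> P + range (act (q ^ Suc k))"
      by (auto intro: set_plus_intro)
  qed
qed

end

section \<open>Lattices over \<open>O[C\<^bsub>2^n\<^esub>]\<close>\<close>

lemma unram_Z2_int_facts:
  assumes "unram_Z2_int TYPE('a::idom)"
  shows unram_two_nonzero: "(2::'a) \<noteq> 0"
    and unram_two_not_unit: "\<not> (2::'a) dvd 1"
    and unram_unit_if_not_two_dvd: "\<And>c::'a. \<not> 2 dvd c \<Longrightarrow> c dvd 1"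
    and unram_eq_0_if_two_powers_dvd: "\<And>c::'a. (\<And>k. 2 ^ k dvd c) \<Longrightarrow> c = 0"
proof -
  have factor: "\<exists>u m. u dvd 1 \<and> x = u * 2 ^ m" if "x \<noteq> 0" for x :: 'a
    using assms that unfolding unram_Z2_int_def by blast
  show two: "(2::'a) \<noteq> 0" "\<not> (2::'a) dvd 1"
    using assms unfolding unram_Z2_int_def by auto
  show "c dvd 1" if not_dvd: "\<not> 2 dvd c" for c :: 'a
  proof -
    from not_dvd have "c \<noteq> 0" by auto
    then obtain u m where u: "u dvd 1" "c = u * 2 ^ m"
      using factor by blast
    with not_dvd have "m = 0" by (cases m) auto
    with u show ?thesis by simp
  qed
  show "c = 0" if "\<And>k. 2 ^ k dvd c" for c :: 'a
  proof (rule ccontr)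
    assume "c \<noteq> 0"
    then obtain u m where u: "u dvd 1" "c = u * 2 ^ m" using factor by blast
    have "2 ^ m * 2 dvd 2 ^ m * u"
      using that[of "Suc m"] u(2) by (simp add: mult.commute)
    then have "2 dvd u" using two(1) by simp
    with u(1) two(2) show False using dvd_trans by blast
  qed
qed

locale cyclic_2_lattice = module_endo scale s
  for scale :: "'a::idom \<Rightarrow> 'm::ab_group_add \<Rightarrow> 'm" (infixr \<open>*s\<close> 75) and s +
  fixes m :: nat
  assumes unram: "unram_Z2_int TYPE('a)"
    and s_order: "s ^^ 2 ^ Suc m = id"
    and torsion_free: "\<And>c x. c *s x = 0 \<Longrightarrow> c = 0 \<or> x = 0"
    and finitely_generated: "\<exists>S. finite S \<and> (\<forall>x. \<exists>c. x = (\<Sum>g\<in>S. c g \<cdot> g))"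
begin

text \<open>The group has order \<open>2^(m+1)\<close>, that is \<open>n = m + 1\<close>.  \<open>T\<close>, \<open>F\<close> and \<open>R\<close> are \<open>Tr_H\<close>,
  \<open>A^H\<close> and the relation submodule of \<open>Q\<close>; \<open>W = A^H + (\<sigma> - 1)A\<close>.\<close>

abbreviation "\<tau> \<equiv> s ^^ 2 ^ m"
abbreviation "T \<equiv> TrH s (Suc m)"
abbreviation "F \<equiv> fixH s (Suc m)"
abbreviation "R \<equiv> relQ scale s (Suc m)"
abbreviation \<pi> :: "'a poly" where "\<pi> \<equiv> [:-1, 1:]"
abbreviation D :: "'a poly" where "D \<equiv> 1 + monom 1 (2 ^ m)"
abbreviation "W \<equiv> F + range (act \<pi>)"

lemma tau_tau: "\<tau> (\<tau> x) = x"
proof -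
  have "\<tau> (\<tau> x) = (s ^^ (2 ^ m + 2 ^ m)) x" by (simp add: funpow_add)
  also have "\<dots> = x" using s_order by (simp add: mult_2)
  finally show ?thesis .
qed

lemma fixH_iff: "x \<in> F \<longleftrightarrow> \<tau> x = x"
  by (simp add: fixH_def)

lemma act_D: "D \<cdot> x = T x"
  by (simp add: act_add_poly act_one act_monom TrH_def)

lemma module_hom_T: "module_hom scale scale T"
proof -
  have "act D = T" by (rule ext) (rule act_D)
  with module_hom_act[of D] show ?thesis by simp
qed

lemmas T_add = module_hom.add[OF module_hom_T]
  and T_scale = module_hom.scale[OF module_hom_T]
  and T_sum = module_hom.sum[OF module_hom_T]

lemma T_in_fixH: "T x \<in> F"
  by (simp add: fixH_iff TrH_def module_hom.add[OF module_hom_funpow] tau_tau add.commute)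

lemma T_fixH: "x \<in> F \<Longrightarrow> T x = 2 *s x"
  by (simp add: fixH_iff TrH_def scale_two)

lemma poly_subspace_fixH: "poly.subspace F"
  unfolding poly.subspace_def Ball_def fixH_iff
  by (simp add: funpow_act module_hom.add[OF module_hom_funpow] module_hom.zero[OF module_hom_funpow])

lemma subspace_fixH: "subspace F"
  by (rule subspace_if_poly_subspace[OF poly_subspace_fixH])

lemma finite_spanning_set:
  obtains G where "finite G" "span G = UNIV"
proof -
  obtain S where S: "finite S" "\<And>x. \<exists>c. x = (\<Sum>g\<in>S. c g \<cdot> g)"
    using finitely_generated by blast
  define G where "G = (\<lambda>(g, i). (s ^^ i) g) ` (S \<times> {..<2 ^ Suc m})"
  have orbit: "(s ^^ i) g \<in> G" if "g \<in> S" for g i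
  proof -
    have "(s ^^ i) g = (s ^^ (i mod 2 ^ Suc m)) g"
      using funpow_mod_eq[where f = s and n = "2 ^ Suc m" and x = g and m = i] s_order by simp
    then show ?thesis
      unfolding G_def using that by (auto intro!: image_eqI[of _ _ "(g, i mod 2 ^ Suc m)"])
  qed
  have "x \<in> span G" for x
  proof -
    obtain c where c: "x = (\<Sum>g\<in>S. c g \<cdot> g)" using S(2) by blast
    show ?thesis
      unfolding c gact_def by (intro span_sum span_scale span_base orbit)
  qed
  then have "span G = UNIV" by auto
  moreover have "finite G" unfolding G_def using S(1) by simp
  ultimately show ?thesis using that by blast
qed

lemma unit_if_not_two_dvd: "\<not> 2 dvd (c::'a) \<Longrightarrow> c dvd 1"
  using unram_unit_if_not_two_dvd[OF unram] .

lemma relQ_eq: "R = act \<pi> ` range T + (\<lambda>a. 2 *s a) ` F"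
  unfolding relQ_def set_plus_def by (auto simp: act_X_minus_1)

lemma subspace_relQ: "subspace R"
proof -
  have "subspace (act \<pi> ` range T)"
    by (intro module_hom.subspace_image[OF module_hom_act] module_hom.subspace_image[OF module_hom_T])
      simp
  moreover have "subspace ((\<lambda>a. 2 *s a) ` F)"
    by (intro module_hom.subspace_image[OF module_hom_scale_self] subspace_fixH)
  ultimately show ?thesis
    unfolding relQ_eq by (rule subspace_set_plus)
qed

lemma two_scale_T_in_relQ: "2 *s T x \<in> R"
proof -
  have "\<pi> \<cdot> T 0 + 2 *s T x \<in> R"
    unfolding relQ_eq by (intro set_plus_intro imageI rangeI T_in_fixH)
  then show ?thesis by (simp add: module_hom.zero[OF module_hom_T] act_X_minus_1 module_hom.zero[OF module_hom_s])
qed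

lemma qbasis_Q_exists: "\<exists>X. qbasis scale {c. 2 dvd c} (range T) R id X"
proof -
  obtain G where G: "finite G" "span G = UNIV" by (rule finite_spanning_set)
  obtain Y where Y: "Y \<subseteq> T ` G" "indep_mod scale {c. 2 dvd c} R ({} \<union> Y)"
    "T ` G \<subseteq> span ({} \<union> Y) + R"
    using indep_mod_extend[OF unit_if_not_two_dvd subspace_relQ finite_imageI[OF G(1)] _ indep_mod_empty]
      two_scale_T_in_relQ by blast
  have "range T = span (T ` G)"
    using module_hom.span_image[OF module_hom_T, of G] G(2) by simp
  also have "\<dots> \<subseteq> span Y + R"
    using Y(3) by (intro span_minimal subspace_set_plus subspace_relQ) simp_all
  finally have "range T \<subseteq> span Y + R" .
  with Y show ?thesis
    unfolding qbasis_id_iff by (intro exI[of _ Y]) auto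
qed

lemma subspace_W: "subspace W"
  by (intro subspace_set_plus subspace_fixH module_hom.subspace_image[OF module_hom_act]) simp

lemma act_in_W_if_mem_ideal2: "p \<in> ideal2 \<pi> D \<Longrightarrow> p \<cdot> x \<in> W"
proof -
  assume "p \<in> ideal2 \<pi> D"
  then obtain a b where "p = a * \<pi> + b * D" unfolding ideal2_iff by blast
  then have "p \<cdot> x = a \<cdot> \<pi> \<cdot> x + b \<cdot> D \<cdot> x"
    by (simp only: act_add_poly act_mult)
  also have "\<dots> = \<pi> \<cdot> a \<cdot> x + D \<cdot> b \<cdot> x"
    by (simp only: act_commute[of a \<pi>] act_commute[of b D])
  finally have p_eq: "p \<cdot> x = T (b \<cdot> x) + \<pi> \<cdot> a \<cdot> x"
    by (simp only: act_D add.commute)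
  show "p \<cdot> x \<in> W"
    unfolding p_eq by (intro set_plus_intro T_in_fixH rangeI)
qed

lemma two_scale_in_W: "2 *s x \<in> W"
  using act_in_W_if_mem_ideal2[OF two_mem_ideal2_X_minus_1, of x]
  by (simp add: numeral_poly act_const)

lemma T_in_relQ_if_W: "x \<in> W \<Longrightarrow> T x \<in> R"
proof -
  assume "x \<in> W"
  then obtain f y where "x = f + \<pi> \<cdot> y" "f \<in> F"
    by (auto elim!: set_plus_elim)
  moreover have "T (\<pi> \<cdot> y) = \<pi> \<cdot> T y"
    by (simp only: act_D[symmetric] act_commute[of D])
  ultimately have "T x = \<pi> \<cdot> T y + 2 *s f"
    by (simp add: T_add T_fixH add.commute)
  then show "T x \<in> R"
    unfolding relQ_eq using \<open>f \<in> F\<close> by (simp add: set_plus_intro)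
qed

lemma indep_mod_W_if_qbasis_T:
  assumes "qbasis scale {c. 2 dvd c} (range T) R T B"
  shows "indep_mod scale {c. 2 dvd c} W B"
  unfolding indep_mod_def
proof (intro allI impI)
  fix S c
  assume S: "finite S" "S \<subseteq> B" "(\<Sum>j\<in>S. c j *s j) \<in> W"
  have "(\<Sum>j\<in>S. c j *s T j) = T (\<Sum>j\<in>S. c j *s j)"
    by (simp add: T_sum T_scale)
  also have "\<dots> \<in> R" using S(3) by (rule T_in_relQ_if_W)
  finally show "\<forall>j\<in>S. c j \<in> {c. 2 dvd c}"
    using assms S(1,2) unfolding qbasis_def by blast
qed

lemma fixH_if_act_X_minus_1_in_fixH:
  assumes "\<pi> \<cdot> z \<in> F"
  shows "z \<in> F"
proof -
  define w where "w = \<tau> z - z"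
  have "s w - w = \<tau> (s z - z) - (s z - z)"
    by (simp add: w_def module_hom.diff[OF module_hom_s] module_hom.diff[OF module_hom_funpow]
        funpow_swap1 algebra_simps)
  also have "\<dots> = 0"
    using assms by (simp add: act_X_minus_1 fixH_iff)
  finally have "s w = w" by simp
  then have "(s ^^ k) w = w" for k
    by (induction k) simp_all
  moreover have "\<tau> w = - w"
    by (simp add: w_def module_hom.diff[OF module_hom_funpow] tau_tau)
  ultimately have "w = - w" by simp
  then have "2 *s w = w + - w"
    unfolding scale_two by (rule arg_cong)
  then have "2 *s w = 0" by simp
  then have "w = 0"
    using torsion_free[of 2 w] unram_two_nonzero[OF unram] by simp
  then show ?thesis
    by (simp add: w_def fixH_iff)
qed

lemma fixH_if_act_X_minus_1_power_in_fixH: "\<pi> ^ k \<cdot> z \<in> F \<Longrightarrow> z \<in> F"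
proof (induction k arbitrary: z)
  case (Suc k)
  then have "\<pi> \<cdot> \<pi> ^ k \<cdot> z \<in> F"
    by (simp only: power_Suc act_mult)
  then show ?case
    by (rule Suc.IH[OF fixH_if_act_X_minus_1_in_fixH])
qed (simp add: act_one)

lemma coeff_mem_ideal2_X_minus_1:
  assumes X: "indep_mod scale {c. 2 dvd c} W X" and S: "finite S" "S \<subseteq> X"
    and sum: "(\<Sum>i\<in>S. c i \<cdot> i) \<in> F" and j: "j \<in> S"
  shows "c j \<in> ideal2 \<pi> D"
proof -
  define e where "e i = poly (c i) 1" for i
  have "\<exists>q. c i = \<pi> * q + [:e i:]" for i
    unfolding e_def by (rule X_minus_1_division)
  then obtain q where q: "\<And>i. c i = \<pi> * q i + [:e i:]"
    by metis
  have "c i \<cdot> i = \<pi> \<cdot> q i \<cdot> i + e i *s i" for i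
    by (subst q) (simp only: act_add_poly act_mult act_const)
  then have "(\<Sum>i\<in>S. c i \<cdot> i) = \<pi> \<cdot> (\<Sum>i\<in>S. q i \<cdot> i) + (\<Sum>i\<in>S. e i *s i)"
    by (simp add: sum.distrib act_sum)
  then have "(\<Sum>i\<in>S. e i *s i) = (\<Sum>i\<in>S. c i \<cdot> i) + \<pi> \<cdot> (- (\<Sum>i\<in>S. q i \<cdot> i))"
    by (simp add: module_hom.neg[OF module_hom_act])
  also have "\<dots> \<in> W"
    using sum by (intro set_plus_intro rangeI)
  finally have "2 dvd e j"
    using indep_modD[OF X S _ j] by simp
  then obtain d where "e j = 2 * d" ..
  then have "[:e j:] = [:d:] * 2"
    by (simp add: numeral_poly mult.commute)
  then have "[:e j:] \<in> ideal2 \<pi> D"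
    by (simp only: ideal2_mult_left[OF two_mem_ideal2_X_minus_1])
  moreover have "\<pi> * q j \<in> ideal2 \<pi> D"
    by (subst mult.commute) (rule ideal2_multiple_left)
  ultimately show ?thesis
    using q[of j] by (simp add: ideal2_add)
qed

lemma coeff_mem_ideal2_X_minus_1_power:
  assumes X: "indep_mod scale {c. 2 dvd c} W X" and S: "finite S" "S \<subseteq> X"
    and sum: "(\<Sum>i\<in>S. c i \<cdot> i) \<in> F"
  shows "\<forall>j\<in>S. c j \<in> ideal2 (\<pi> ^ k) D"
proof (induction k)
  case 0
  have "x \<in> ideal2 1 D" for x
    using ideal2_multiple_left[of x 1 D] by simp
  then show ?case by simp
next
  case (Suc k)
  then obtain a b where ab: "\<And>j. j \<in> S \<Longrightarrow> c j = a j * \<pi> ^ k + b j * D"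
    unfolding ideal2_iff by metis
  have "c j \<cdot> j = \<pi> ^ k \<cdot> a j \<cdot> j + T (b j \<cdot> j)" if "j \<in> S" for j
    unfolding ab[OF that] act_add_poly[of "a j * \<pi> ^ k"] act_mult_right act_D ..
  then have "(\<Sum>i\<in>S. c i \<cdot> i) = \<pi> ^ k \<cdot> (\<Sum>i\<in>S. a i \<cdot> i) + T (\<Sum>i\<in>S. b i \<cdot> i)"
    by (simp add: sum.distrib act_sum T_sum)
  then have "\<pi> ^ k \<cdot> (\<Sum>i\<in>S. a i \<cdot> i) = (\<Sum>i\<in>S. c i \<cdot> i) - T (\<Sum>i\<in>S. b i \<cdot> i)"
    by simp
  also have "\<dots> \<in> F"
    using sum T_in_fixH subspace_fixH by (simp add: subspace_diff)
  finally have "(\<Sum>i\<in>S. a i \<cdot> i) \<in> F"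
    by (rule fixH_if_act_X_minus_1_power_in_fixH)
  then have "a j \<in> ideal2 \<pi> D" if "j \<in> S" for j
    using coeff_mem_ideal2_X_minus_1[OF X S] that by blast
  moreover have "\<pi> ^ k \<in> ideal2 (\<pi> ^ k) D"
    using ideal2_multiple_left[of 1] by simp
  ultimately have "a j * \<pi> ^ k \<in> ideal2 (\<pi> ^ Suc k) D" if "j \<in> S" for j
    using ideal2_mult that by (metis power_Suc)
  then show ?case
    using ab ideal2_add ideal2_multiple_right by metis
qed

lemma trH_ideal_eq: "trH_ideal (Suc m) = ideal2 (monom 1 (2 ^ Suc m) - 1) D"
  by (simp add: trH_ideal_def ideal2_def)

lemma poly_indep_mod_fixH:
  assumes X: "indep_mod scale {c. 2 dvd c} W X"
  shows "indep_mod act (trH_ideal (Suc m)) F X"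
  unfolding indep_mod_def
proof (intro allI impI ballI)
  fix S c j
  assume S: "finite S" "S \<subseteq> X" and sum: "(\<Sum>i\<in>S. c i \<cdot> i) \<in> F" and j: "j \<in> S"
  obtain r where "\<pi> ^ 2 ^ m = 1 + monom 1 (2 ^ m) + 2 * r"
    using X_minus_1_pow_two_pow by blast
  then have "\<pi> ^ 2 ^ m = r * [:2:] + 1 * D"
    by (simp add: numeral_poly mult.commute)
  then have "\<pi> ^ 2 ^ m \<in> ideal2 [:2:] D"
    unfolding ideal2_iff by blast
  then have "\<pi> ^ (2 ^ m * k) \<in> ideal2 ([:2:] ^ k) D" for k
    by (simp add: power_mult ideal2_power)
  then have "c j \<in> ideal2 ([:2:] ^ k) D" for k
    using coeff_mem_ideal2_X_minus_1_power[OF X S sum] j ideal2_trans by blast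
  then have "D dvd c j"
    by (intro monic_dvd_if_mem_ideal2_powers[OF lead_coeff_1_plus_monom]
        unram_eq_0_if_two_powers_dvd[OF unram]) simp_all
  then show "c j \<in> trH_ideal (Suc m)"
    unfolding trH_ideal_eq by (metis dvd_def mult.commute ideal2_multiple_right)
qed

lemma UNIV_subset_if_plus_range_act_X_minus_1:
  assumes P: "poly.subspace P" and F_P: "F \<subseteq> P" and "UNIV \<subseteq> P + range (act \<pi>)"
  shows "UNIV \<subseteq> P"
proof -
  have P_pi: "UNIV \<subseteq> P + range (act (\<pi> ^ 2 ^ m))"
    by (rule UNIV_subset_plus_range_act_power[OF P assms(3)])
  obtain r where r: "\<pi> ^ 2 ^ m = D + 2 * r"
    using X_minus_1_pow_two_pow by blast
  obtain G where G: "finite G" "span G = UNIV" by (rule finite_spanning_set)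
  have "span G \<subseteq> P + (\<lambda>z. 2 *s z) ` span G"
  proof
    fix x
    have "x \<in> P + range (act (\<pi> ^ 2 ^ m))" using P_pi by (rule subsetD) simp
    then obtain p y where "p \<in> P" "x = p + \<pi> ^ 2 ^ m \<cdot> y"
      by (auto elim!: set_plus_elim)
    moreover have "\<pi> ^ 2 ^ m \<cdot> y = T y + 2 *s (r \<cdot> y)"
      unfolding r act_add_poly[of D] act_mult act_D numeral_poly act_const ..
    ultimately have "x = (p + T y) + 2 *s (r \<cdot> y)"
      by (simp add: add.assoc)
    moreover have "p + T y \<in> P"
      using P \<open>p \<in> P\<close> subsetD[OF F_P T_in_fixH] by (rule poly.subspace_add)
    ultimately show "x \<in> P + (\<lambda>z. 2 *s z) ` span G"
      using G(2) by (auto intro: set_plus_intro)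
  qed
  then have "span G \<subseteq> P"
    using nakayama_span[OF unit_if_not_two_dvd unram_two_not_unit[OF unram] G(1)
        subspace_if_poly_subspace[OF P]]
    by simp
  then show ?thesis
    using G(2) by simp
qed

lemma UNIV_subset_poly_span_plus_fixH:
  assumes "UNIV \<subseteq> span X + W"
  shows "UNIV \<subseteq> poly.span X + F"
proof (rule UNIV_subset_if_plus_range_act_X_minus_1)
  show "poly.subspace (poly.span X + F)"
    by (intro poly.subspace_set_plus poly.subspace_span poly_subspace_fixH)
  show "F \<subseteq> poly.span X + F"
    using set_plus_intro[OF poly.span_zero] by fastforce
  show "UNIV \<subseteq> poly.span X + F + range (act \<pi>)"
  proof
    fix x
    have "x \<in> span X + W" using assms by (rule subsetD) simp
    then obtain a w where "x = a + w" "a \<in> span X" "w \<in> W"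
      by (auto elim!: set_plus_elim)
    moreover obtain f y where "w = f + \<pi> \<cdot> y" "f \<in> F"
      using \<open>w \<in> W\<close> by (auto elim!: set_plus_elim)
    ultimately have "x = (a + f) + \<pi> \<cdot> y"
      by (simp add: add.assoc)
    moreover have "a + f \<in> poly.span X + F"
      using subsetD[OF span_subset_poly_span \<open>a \<in> span X\<close>] \<open>f \<in> F\<close> by (rule set_plus_intro)
    ultimately show "x \<in> poly.span X + F + range (act \<pi>)"
      by (simp add: set_plus_intro)
  qed
qed

lemma qbasis_extends:
  assumes B: "qbasis scale {c. 2 dvd c} (range T) R T B"
  shows "\<exists>X. B \<subseteq> X \<and> qbasis act (trH_ideal (Suc m)) UNIV F id X"
proof -
  obtain G where G: "finite G" "span G = UNIV" by (rule finite_spanning_set)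
  obtain Y where "Y \<subseteq> G" and Y: "indep_mod scale {c. 2 dvd c} W (B \<union> Y)" "G \<subseteq> span (B \<union> Y) + W"
    by (rule indep_mod_extend[OF unit_if_not_two_dvd subspace_W G(1) two_scale_in_W indep_mod_W_if_qbasis_T[OF B]])
  have "UNIV \<subseteq> span (B \<union> Y) + W"
    using span_minimal[OF Y(2) subspace_set_plus[OF subspace_span subspace_W]] G(2) by simp
  then have "qbasis act (trH_ideal (Suc m)) UNIV F id (B \<union> Y)"
    by (simp add: poly.qbasis_id_iff UNIV_subset_poly_span_plus_fixH poly_indep_mod_fixH[OF Y(1)])
  then show ?thesis by blast
qed

end

theorem lemma2p2:
  fixes scale :: "'a::idom \<Rightarrow> 'm::ab_group_add \<Rightarrow> 'm"
    and s :: "'m \<Rightarrow> 'm" and n :: nat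
  assumes Ok: "unram_Z2_int TYPE('a)"
    and modl: "module scale"
    and n: "n \<ge> 1"
    and s_add: "\<forall>x y. s (x + y) = s x + s y"
    and s_lin: "\<forall>c x. s (scale c x) = scale c (s x)"
    and s_ord: "s ^^ (2 ^ n) = id"
    and fg: "\<exists>S. finite S \<and> (\<forall>x. \<exists>c. x = (\<Sum>g\<in>S. gact scale s (c g) g))"
    and tf: "\<forall>c x. scale c x = 0 \<longrightarrow> c = 0 \<or> x = 0"
  shows "(\<exists>X. qbasis scale {c. (2::'a) dvd c} (range (TrH s n)) (relQ scale s n) id X)
    \<and> (\<forall>B. qbasis scale {c. (2::'a) dvd c} (range (TrH s n)) (relQ scale s n) (TrH s n) B
           \<longrightarrow> (\<exists>X. B \<subseteq> X \<and> qbasis (gact scale s) (trH_ideal n) UNIV (fixH s n) id X))"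
proof -
  obtain m where n_eq: "n = Suc m" using n by (cases n) auto
  have "module_hom scale scale s"
    using modl s_add s_lin by (simp add: module_hom_iff)
  then interpret cyclic_2_lattice scale s m
    using modl Ok s_ord fg tf unfolding n_eq
    by (simp add: cyclic_2_lattice_def cyclic_2_lattice_axioms_def module_endo_def module_endo_axioms_def)
  show ?thesis
    unfolding n_eq using qbasis_Q_exists qbasis_extends by blast
qed

end
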